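(* Let $I$ and $M$ be sets and let $\Phi\colon I\times I\ni(\alpha,\beta)\mapsto\Phi_{\alpha\beta}\in 2^{M\times M}$ be a map (so each $\Phi_{\alpha\beta}$ is a binary relation contained in $M\times M$). Then $\Phi$ satisfies, for all $\alpha,\beta,\gamma\in I$, $$\Phi_{\alpha\beta}\circ\Phi_{\beta\gamma}\subseteq\Phi_{\alpha\gamma},\qquad \Phi_{\alpha\beta}^{-1}\subseteq\Phi_{\beta\alpha},\qquad \Phi_{\alpha\alpha}\subseteq\mathrm{id}_M,$$ if and only if there exists a system $\{\varphi_\alpha\}_{\alpha\in I}$ of binary relations, each of which is an injective co-injection, such that $\Phi_{\alpha\beta}=\varphi_\alpha\circ\varphi_\beta^{-1}$ for all $(\alpha,\beta)\in I\times I$.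
   Context: A binary relation is a set of ordered pairs. For binary relations $\rho,\sigma$: the composition is $\rho\circ\sigma=\{(a,b)\mid \exists c\colon (c,b)\in\rho\ \wedge\ (a,c)\in\sigma\}$; the inverse is $\rho^{-1}=\{(a,b)\mid (b,a)\in\rho\}$; $\mathrm{dom}\,\rho=\{a\mid\exists b\colon (a,b)\in\rho\}$, $\mathrm{rng}\,\rho=\{b\mid \exists a\colon (a,b)\in\rho\}$; $\mathrm{id}_M=\{(x,x)\mid x\in M\}$. A binary relation $\rho$ is called injective (an injection) if $(b_1,a)\in\rho$ and $(b_2,a)\in\rho$ imply $b_1=b_2$; it is called a co-injection if $\rho^{-1}$ is injective, i.e. $(b,a_1)\in\rho$ and $(b,a_2)\in\rho$ imply $a_1=a_2$. An injective co-injection is a relation that is both. *)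

theory Defs
  imports Main
begin

text \<open>Composition in the paper's convention:
  rho o sigma = {(a,b). exists c. (c,b) in rho and (a,c) in sigma}
  (apply sigma first, then rho).\<close>
definition rcomp :: "('b \<times> 'c) set \<Rightarrow> ('a \<times> 'b) set \<Rightarrow> ('a \<times> 'c) set" where
  "rcomp \<rho> \<sigma> = {(a, b). \<exists>c. (c, b) \<in> \<rho> \<and> (a, c) \<in> \<sigma>}"

definition injective_rel :: "('a \<times> 'b) set \<Rightarrow> bool" where
  "injective_rel \<rho> \<longleftrightarrow> (\<forall>b1 b2 a. (b1, a) \<in> \<rho> \<and> (b2, a) \<in> \<rho> \<longrightarrow> b1 = b2)"

definition coinjective_rel :: "('a \<times> 'b) set \<Rightarrow> bool" where
  "coinjective_rel \<rho> \<longleftrightarrow> injective_rel (converse \<rho>)"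

definition inj_coinj :: "('a \<times> 'b) set \<Rightarrow> bool" where
  "inj_coinj \<rho> \<longleftrightarrow> injective_rel \<rho> \<and> coinjective_rel \<rho>"

end

theory Submission
  imports Defs
begin

text \<open>Relate \<open>(\<beta>, a)\<close> and \<open>(\<alpha>, b)\<close> in \<open>I \<times> M\<close> when \<open>(a, b) \<in> \<Phi>\<^sub>\<alpha>\<^sub>\<beta>\<close>. The first two
  conditions make this a partial equivalence relation; let \<open>\<phi>\<^sub>\<alpha>\<close> send a chosen representative
  of the class of \<open>(\<alpha>, b)\<close> to \<open>b\<close>. This \<open>\<phi>\<^sub>\<alpha>\<close> is injective by construction, co-injective
  because \<open>\<Phi>\<^sub>\<alpha>\<^sub>\<alpha>\<close> lies in the diagonal, and \<open>(a, b) \<in> \<phi>\<^sub>\<alpha> \<circ> \<phi>\<^sub>\<beta>\<^sup>-\<^sup>1\<close> says precisely that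
  \<open>(\<beta>, a)\<close> and \<open>(\<alpha>, b)\<close> lie in one class. Conversely, injectivity gives
  \<open>\<phi>\<^sub>\<beta>\<^sup>-\<^sup>1 \<circ> \<phi>\<^sub>\<beta> \<subseteq> id\<close>, whence the composition law, and co-injectivity gives
  \<open>\<phi>\<^sub>\<alpha> \<circ> \<phi>\<^sub>\<alpha>\<^sup>-\<^sup>1 \<subseteq> id\<close>.\<close>

lemma rcomp_eq_relcomp: "rcomp \<rho> \<sigma> = \<sigma> O \<rho>"
  unfolding rcomp_def by auto

lemma inj_coinj_iff_single_valued: "inj_coinj \<rho> \<longleftrightarrow> single_valued \<rho> \<and> single_valued (\<rho>\<inverse>)"
  unfolding inj_coinj_def coinjective_rel_def injective_rel_def single_valued_def by blast

lemma single_valued_iff_converse_relcomp_subset_Id: "single_valued r \<longleftrightarrow> r\<inverse> O r \<subseteq> Id"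
  unfolding single_valued_def by auto

lemma injective_coinjective_factorization_conditions:
  assumes sv: "\<And>\<alpha>. \<alpha> \<in> I \<Longrightarrow> single_valued (\<phi> \<alpha>) \<and> single_valued ((\<phi> \<alpha>)\<inverse>)"
    and \<Phi>: "\<And>\<alpha> \<beta>. \<alpha> \<in> I \<Longrightarrow> \<beta> \<in> I \<Longrightarrow> \<Phi> \<alpha> \<beta> = (\<phi> \<beta>)\<inverse> O \<phi> \<alpha>"
    and \<alpha>: "\<alpha> \<in> I" and \<beta>: "\<beta> \<in> I" and \<gamma>: "\<gamma> \<in> I"
  shows "\<Phi> \<beta> \<gamma> O \<Phi> \<alpha> \<beta> \<subseteq> \<Phi> \<alpha> \<gamma>" and "(\<Phi> \<alpha> \<beta>)\<inverse> = \<Phi> \<beta> \<alpha>" and "\<Phi> \<alpha> \<alpha> \<subseteq> Id"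
proof -
  have "\<phi> \<beta> O (\<phi> \<beta>)\<inverse> \<subseteq> Id"
    using sv[OF \<beta>] single_valued_iff_converse_relcomp_subset_Id[of "(\<phi> \<beta>)\<inverse>"] by simp
  then have "(\<phi> \<gamma>)\<inverse> O (\<phi> \<beta> O (\<phi> \<beta>)\<inverse>) O \<phi> \<alpha> \<subseteq> (\<phi> \<gamma>)\<inverse> O Id O \<phi> \<alpha>"
    by (intro relcomp_mono) auto
  then show "\<Phi> \<beta> \<gamma> O \<Phi> \<alpha> \<beta> \<subseteq> \<Phi> \<alpha> \<gamma>"
    by (simp add: \<Phi> \<alpha> \<beta> \<gamma> O_assoc)
  show "(\<Phi> \<alpha> \<beta>)\<inverse> = \<Phi> \<beta> \<alpha>"
    by (simp add: \<Phi> \<alpha> \<beta> converse_relcomp)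
  show "\<Phi> \<alpha> \<alpha> \<subseteq> Id"
    using sv[OF \<alpha>] \<Phi>[OF \<alpha> \<alpha>] single_valued_iff_converse_relcomp_subset_Id by metis
qed

definition per_rep :: "('a \<times> 'a) set \<Rightarrow> 'a \<Rightarrow> 'a" where
  "per_rep R x = (SOME y. (x, y) \<in> R)"

lemma per_rep_eq_iff:
  assumes "sym R" "trans R" "(x, x) \<in> R" "(y, y) \<in> R"
  shows "per_rep R x = per_rep R y \<longleftrightarrow> (x, y) \<in> R"
proof
  assume "per_rep R x = per_rep R y"
  moreover have "(x, per_rep R x) \<in> R" "(y, per_rep R y) \<in> R"
    unfolding per_rep_def using assms(3,4) by (auto intro: someI)
  ultimately show "(x, y) \<in> R"
    using assms(1,2) by (metis symD transD)
next
  assume "(x, y) \<in> R"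
  then have "(x, z) \<in> R \<longleftrightarrow> (y, z) \<in> R" for z
    using assms(1,2) by (meson symD transD)
  then show "per_rep R x = per_rep R y"
    unfolding per_rep_def by simp
qed

definition glue_rel :: "'i set \<Rightarrow> ('i \<Rightarrow> 'i \<Rightarrow> ('m \<times> 'm) set) \<Rightarrow> (('i \<times> 'm) \<times> ('i \<times> 'm)) set" where
  "glue_rel I \<Phi> = {((\<beta>, a), (\<alpha>, b)). \<alpha> \<in> I \<and> \<beta> \<in> I \<and> (a, b) \<in> \<Phi> \<alpha> \<beta>}"

definition glue_chart :: "'i set \<Rightarrow> ('i \<Rightarrow> 'i \<Rightarrow> ('m \<times> 'm) set) \<Rightarrow> 'i \<Rightarrow> (('i \<times> 'm) \<times> 'm) set" where
  "glue_chart I \<Phi> \<alpha> =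
     {(per_rep (glue_rel I \<Phi>) (\<alpha>, b), b) | b. ((\<alpha>, b), (\<alpha>, b)) \<in> glue_rel I \<Phi>}"

lemma single_valued_converse_glue_chart: "single_valued ((glue_chart I \<Phi> \<alpha>)\<inverse>)"
  unfolding glue_chart_def single_valued_def by auto

context
  fixes I :: "'i set" and \<Phi> :: "'i \<Rightarrow> 'i \<Rightarrow> ('m \<times> 'm) set"
  assumes comp: "\<And>\<alpha> \<beta> \<gamma>. \<alpha> \<in> I \<Longrightarrow> \<beta> \<in> I \<Longrightarrow> \<gamma> \<in> I \<Longrightarrow> \<Phi> \<beta> \<gamma> O \<Phi> \<alpha> \<beta> \<subseteq> \<Phi> \<alpha> \<gamma>"
    and conv: "\<And>\<alpha> \<beta>. \<alpha> \<in> I \<Longrightarrow> \<beta> \<in> I \<Longrightarrow> (\<Phi> \<alpha> \<beta>)\<inverse> \<subseteq> \<Phi> \<beta> \<alpha>"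
    and diag: "\<And>\<alpha>. \<alpha> \<in> I \<Longrightarrow> \<Phi> \<alpha> \<alpha> \<subseteq> Id"
begin

lemma sym_glue_rel: "sym (glue_rel I \<Phi>)"
  unfolding glue_rel_def using conv by (auto intro!: symI)

lemma trans_glue_rel: "trans (glue_rel I \<Phi>)"
  unfolding trans_def glue_rel_def using comp by blast

lemma glue_rel_eq_per_rep:
  assumes "((\<beta>, a), (\<beta>, a)) \<in> glue_rel I \<Phi>" "((\<alpha>, b), (\<alpha>, b)) \<in> glue_rel I \<Phi>"
  shows "per_rep (glue_rel I \<Phi>) (\<beta>, a) = per_rep (glue_rel I \<Phi>) (\<alpha>, b)
           \<longleftrightarrow> ((\<beta>, a), (\<alpha>, b)) \<in> glue_rel I \<Phi>"
  using per_rep_eq_iff[OF sym_glue_rel trans_glue_rel assms] .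

lemma single_valued_glue_chart: "single_valued (glue_chart I \<Phi> \<alpha>)"
proof (rule single_valuedI)
  fix x b b' assume "(x, b) \<in> glue_chart I \<Phi> \<alpha>" "(x, b') \<in> glue_chart I \<Phi> \<alpha>"
  then have "((\<alpha>, b), (\<alpha>, b')) \<in> glue_rel I \<Phi>"
    unfolding glue_chart_def using glue_rel_eq_per_rep by auto
  then show "b = b'"
    unfolding glue_rel_def using diag by auto
qed

lemma glue_chart_factorization:
  assumes "\<alpha> \<in> I" "\<beta> \<in> I"
  shows "\<Phi> \<alpha> \<beta> = (glue_chart I \<Phi> \<beta>)\<inverse> O glue_chart I \<Phi> \<alpha>"
proof (intro equalityI subrelI)
  fix a b assume "(a, b) \<in> \<Phi> \<alpha> \<beta>"
  then have ab: "((\<beta>, a), (\<alpha>, b)) \<in> glue_rel I \<Phi>"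
    using assms unfolding glue_rel_def by simp
  then have "((\<beta>, a), (\<beta>, a)) \<in> glue_rel I \<Phi>" "((\<alpha>, b), (\<alpha>, b)) \<in> glue_rel I \<Phi>"
    using sym_glue_rel trans_glue_rel by (meson symD transD)+
  with ab show "(a, b) \<in> (glue_chart I \<Phi> \<beta>)\<inverse> O glue_chart I \<Phi> \<alpha>"
    unfolding glue_chart_def using glue_rel_eq_per_rep by blast
next
  fix a b assume "(a, b) \<in> (glue_chart I \<Phi> \<beta>)\<inverse> O glue_chart I \<Phi> \<alpha>"
  then have "((\<beta>, a), (\<alpha>, b)) \<in> glue_rel I \<Phi>"
    unfolding glue_chart_def using glue_rel_eq_per_rep by auto
  then show "(a, b) \<in> \<Phi> \<alpha> \<beta>"
    unfolding glue_rel_def by simp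
qed

lemma exists_injective_coinjective_factorization:
  "\<exists>\<phi> :: 'i \<Rightarrow> (('i \<times> 'm) \<times> 'm) set. (\<forall>\<alpha>\<in>I. single_valued (\<phi> \<alpha>) \<and> single_valued ((\<phi> \<alpha>)\<inverse>))
      \<and> (\<forall>\<alpha>\<in>I. \<forall>\<beta>\<in>I. \<Phi> \<alpha> \<beta> = (\<phi> \<beta>)\<inverse> O \<phi> \<alpha>)"
  by (intro exI[of _ "glue_chart I \<Phi>"] conjI ballI)
    (simp_all add: single_valued_glue_chart single_valued_converse_glue_chart glue_chart_factorization)

end

theorem theorem1:
  fixes I :: "'i set" and M :: "'m set" and \<Phi> :: "'i \<Rightarrow> 'i \<Rightarrow> ('m \<times> 'm) set"
  assumes "\<forall>\<alpha>\<in>I. \<forall>\<beta>\<in>I. \<Phi> \<alpha> \<beta> \<subseteq> M \<times> M"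
  shows "((\<forall>\<alpha>\<in>I. \<forall>\<beta>\<in>I. \<forall>\<gamma>\<in>I.
              rcomp (\<Phi> \<alpha> \<beta>) (\<Phi> \<beta> \<gamma>) \<subseteq> \<Phi> \<alpha> \<gamma>
            \<and> converse (\<Phi> \<alpha> \<beta>) \<subseteq> \<Phi> \<beta> \<alpha>
            \<and> \<Phi> \<alpha> \<alpha> \<subseteq> Id_on M)
          \<longrightarrow> (\<exists>\<phi> :: 'i \<Rightarrow> (('i \<times> 'm) \<times> 'm) set.
                 (\<forall>\<alpha>\<in>I. inj_coinj (\<phi> \<alpha>))
               \<and> (\<forall>\<alpha>\<in>I. \<forall>\<beta>\<in>I. \<Phi> \<alpha> \<beta> = rcomp (\<phi> \<alpha>) (converse (\<phi> \<beta>)))))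
       \<and> (\<forall>\<phi> :: 'i \<Rightarrow> ('x \<times> 'm) set.
              ((\<forall>\<alpha>\<in>I. inj_coinj (\<phi> \<alpha>))
               \<and> (\<forall>\<alpha>\<in>I. \<forall>\<beta>\<in>I. \<Phi> \<alpha> \<beta> = rcomp (\<phi> \<alpha>) (converse (\<phi> \<beta>))))
            \<longrightarrow> (\<forall>\<alpha>\<in>I. \<forall>\<beta>\<in>I. \<forall>\<gamma>\<in>I.
                   rcomp (\<Phi> \<alpha> \<beta>) (\<Phi> \<beta> \<gamma>) \<subseteq> \<Phi> \<alpha> \<gamma>
                 \<and> converse (\<Phi> \<alpha> \<beta>) \<subseteq> \<Phi> \<beta> \<alpha>
                 \<and> \<Phi> \<alpha> \<alpha> \<subseteq> Id_on M))"
  unfolding rcomp_eq_relcomp inj_coinj_iff_single_valued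
proof (intro conjI impI allI)
  assume conditions: "\<forall>\<alpha>\<in>I. \<forall>\<beta>\<in>I. \<forall>\<gamma>\<in>I. \<Phi> \<beta> \<gamma> O \<Phi> \<alpha> \<beta> \<subseteq> \<Phi> \<alpha> \<gamma>
    \<and> (\<Phi> \<alpha> \<beta>)\<inverse> \<subseteq> \<Phi> \<beta> \<alpha> \<and> \<Phi> \<alpha> \<alpha> \<subseteq> Id_on M"
  show "\<exists>\<phi> :: 'i \<Rightarrow> (('i \<times> 'm) \<times> 'm) set. (\<forall>\<alpha>\<in>I. single_valued (\<phi> \<alpha>) \<and> single_valued ((\<phi> \<alpha>)\<inverse>))
    \<and> (\<forall>\<alpha>\<in>I. \<forall>\<beta>\<in>I. \<Phi> \<alpha> \<beta> = (\<phi> \<beta>)\<inverse> O \<phi> \<alpha>)"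
    by (rule exists_injective_coinjective_factorization) (use conditions in fast)+
next
  fix \<phi> :: "'i \<Rightarrow> ('x \<times> 'm) set"
  assume "(\<forall>\<alpha>\<in>I. single_valued (\<phi> \<alpha>) \<and> single_valued ((\<phi> \<alpha>)\<inverse>))
    \<and> (\<forall>\<alpha>\<in>I. \<forall>\<beta>\<in>I. \<Phi> \<alpha> \<beta> = (\<phi> \<beta>)\<inverse> O \<phi> \<alpha>)"
  then have "\<Phi> \<beta> \<gamma> O \<Phi> \<alpha> \<beta> \<subseteq> \<Phi> \<alpha> \<gamma> \<and> (\<Phi> \<alpha> \<beta>)\<inverse> \<subseteq> \<Phi> \<beta> \<alpha> \<and> \<Phi> \<alpha> \<alpha> \<subseteq> Id"
    if "\<alpha> \<in> I" "\<beta> \<in> I" "\<gamma> \<in> I" for \<alpha> \<beta> \<gamma>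
    using injective_coinjective_factorization_conditions[of I \<phi> \<Phi>] that by simp
  moreover have "\<Phi> \<alpha> \<alpha> \<subseteq> Id \<Longrightarrow> \<Phi> \<alpha> \<alpha> \<subseteq> Id_on M" if "\<alpha> \<in> I" for \<alpha>
    using assms that by auto
  ultimately show "\<forall>\<alpha>\<in>I. \<forall>\<beta>\<in>I. \<forall>\<gamma>\<in>I. \<Phi> \<beta> \<gamma> O \<Phi> \<alpha> \<beta> \<subseteq> \<Phi> \<alpha> \<gamma>
    \<and> (\<Phi> \<alpha> \<beta>)\<inverse> \<subseteq> \<Phi> \<beta> \<alpha> \<and> \<Phi> \<alpha> \<alpha> \<subseteq> Id_on M"
    by metis
qed

end
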